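(* For every $\alpha>0$ and every positive integer $\ell$ there is $\rho>0$ such that the following holds for every $n$-vertex $\ell$-uniform hypergraph $\mathcal{H}$ with $e(\mathcal{H})\le\rho n^\ell$: for every $p\in[0,1]$, if $R$ is the random subset of $V(\mathcal{H})$ containing each vertex independently with probability $p$, then \[ \Pr\big(e(\mathcal{H}[R])\ge\alpha (np)^\ell\big)\le\exp(-\rho np). \]
   Context: $\mathcal{H}[R]=\{A\in\mathcal{H}:A\subseteq R\}$ and $e(\cdot)$ denotes the number of edges. *)

theory Defs
  imports "HOL-Probability.Probability"
begin

definition uniform_hypergraph :: "nat \<Rightarrow> nat \<Rightarrow> nat set set \<Rightarrow> bool" where
  "uniform_hypergraph n l H \<longleftrightarrow> (\<forall>A\<in>H. A \<subseteq> {..<n} \<and> card A = l)"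

definition induced_edges :: "nat set set \<Rightarrow> nat set \<Rightarrow> nat" where
  "induced_edges H R = card {A \<in> H. A \<subseteq> R}"

text \<open>Random subset of {0..<n} containing each vertex independently with probability p,
  represented by its indicator function.\<close>
definition random_subset :: "nat \<Rightarrow> real \<Rightarrow> (nat \<Rightarrow> bool) pmf" where
  "random_subset n p = Pi_pmf {..<n} False (\<lambda>_. bernoulli_pmf p)"

end

theory Submission
  imports Defs
begin

text \<open>Moment method. Write \<open>X = e(H[R])\<close>, \<open>m = np\<close> and \<open>C = \<rho>(1 + l\<^sup>2) m\<^sup>l\<close>.
  Since \<open>X\<close> is a sum of edge indicators, \<open>E[1[U \<subseteq> R] X\<^bsup>k+1\<^esup>] = \<Sum>\<^sub>A E[1[U \<union> A \<subseteq> R] X\<^sup>k]\<close>.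
  Sorting the edges \<open>A\<close> by \<open>|A \<inter> U|\<close> shows \<open>\<Sum>\<^sub>A p\<^bsup>|U \<union> A|\<^esup> \<le> p\<^bsup>|U|\<^esup> C\<close> as long as
  \<open>|U| \<le> \<rho> l m\<close>, so induction on \<open>k\<close> gives \<open>E[X\<^sup>K] \<le> C\<^sup>K\<close> for \<open>K = \<lceil>\<rho> m\<rceil>\<close> (the sets \<open>U\<close>
  reached have at most \<open>Kl\<close> vertices). Markov's inequality for \<open>X\<^sup>K\<close> then bounds
  \<open>P(X \<ge> \<alpha> m\<^sup>l)\<close> by \<open>(C / \<alpha> m\<^sup>l)\<^sup>K \<le> e\<^sup>-\<^sup>K \<le> e\<^bsup>-\<rho> m\<^esup>\<close> once \<open>\<rho>(1 + l\<^sup>2) \<le> \<alpha>/e\<close>.\<close>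

lemma uniform_hypergraph_edgeD:
  assumes "uniform_hypergraph n l H" "A \<in> H"
  shows "A \<subseteq> {..<n}" "finite A" "card A = l"
  using assms finite_subset[of A "{..<n}"] by (auto simp: uniform_hypergraph_def)

lemma uniform_hypergraph_finite:
  assumes "uniform_hypergraph n l H"
  shows "finite H"
  by (rule finite_subset[of _ "Pow {..<n}"]) (use assms in \<open>auto simp: uniform_hypergraph_def\<close>)

lemma binomial_le_power: "n choose k \<le> n ^ k"
  by (cases "k \<le> n") (auto intro: binomial_le_pow simp: binomial_eq_0)

lemma card_edges_meeting_le:
  assumes H: "uniform_hypergraph n l H" and U: "U \<subseteq> {..<n}"
  shows "card {A\<in>H. card (A \<inter> U) = b} \<le> card U ^ b * n ^ (l - b)"
proof -
  have fU: "finite U" using U finite_subset by blast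
  let ?S = "{B. B \<subseteq> U \<and> card B = b} \<times> {C. C \<subseteq> {..<n} \<and> card C = l - b}"
  have "inj_on (\<lambda>A. (A \<inter> U, A - U)) {A\<in>H. card (A \<inter> U) = b}"
    by (rule inj_onI) auto
  moreover have "(\<lambda>A. (A \<inter> U, A - U)) ` {A\<in>H. card (A \<inter> U) = b} \<subseteq> ?S"
    using uniform_hypergraph_edgeD[OF H] by (auto simp: card_Diff_subset_Int)
  ultimately have "card {A\<in>H. card (A \<inter> U) = b} \<le> card ?S"
    using fU by (intro card_inj_on_le) auto
  also have "card ?S = (card U choose b) * (n choose (l - b))"
    using n_subsets[OF fU, of b] n_subsets[of "{..<n}" "l - b"] by (simp add: card_cartesian_product)
  also have "\<dots> \<le> card U ^ b * n ^ (l - b)"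
    by (intro mult_mono binomial_le_power) auto
  finally show ?thesis .
qed

lemma sum_power_card_Un_edge_le:
  fixes p :: real
  assumes H: "uniform_hypergraph n l H" and U: "U \<subseteq> {..<n}" and p: "0 \<le> p" "p \<le> 1"
  shows "(\<Sum>A\<in>H. p ^ card (U \<union> A)) \<le>
     p ^ card U * (card H * p ^ l + (\<Sum>b=1..l. real (card U) ^ b * (n * p) ^ (l - b)))"
proof -
  have fU: "finite U" using U finite_subset by blast
  have fH: "finite H" using uniform_hypergraph_finite[OF H] .
  have meet_le: "card (A \<inter> U) \<in> {0..l}" if "A \<in> H" for A
    using uniform_hypergraph_edgeD[OF H that] card_mono[of A "A \<inter> U"] by auto
  have edge: "p ^ card (U \<union> A) = p ^ card U * p ^ (l - card (A \<inter> U))" if "A \<in> H" for A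
  proof -
    have "card (U \<union> A) + card (A \<inter> U) = card U + l"
      using card_Un_Int[OF fU uniform_hypergraph_edgeD(2)[OF H that]]
        uniform_hypergraph_edgeD(3)[OF H that] by (simp add: Int_commute)
    then have "card (U \<union> A) = card U + (l - card (A \<inter> U))"
      using meet_le[OF that] by simp
    then show ?thesis by (simp add: power_add)
  qed
  have "(\<Sum>A\<in>H. p ^ card (U \<union> A)) = p ^ card U * (\<Sum>A\<in>H. p ^ (l - card (A \<inter> U)))"
    by (simp add: edge sum_distrib_left)
  also have "(\<Sum>A\<in>H. p ^ (l - card (A \<inter> U)))
      = (\<Sum>b=0..l. \<Sum>A\<in>{A\<in>H. card (A \<inter> U) = b}. p ^ (l - card (A \<inter> U)))"
    by (rule sum.group[OF fH finite_atLeastAtMost, symmetric]) (use meet_le in blast)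
  also have "\<dots> = (\<Sum>b=0..l. card {A\<in>H. card (A \<inter> U) = b} * p ^ (l - b))"
    by simp
  also have "\<dots> = card {A\<in>H. card (A \<inter> U) = 0} * p ^ l
      + (\<Sum>b=1..l. card {A\<in>H. card (A \<inter> U) = b} * p ^ (l - b))"
    by (simp add: sum.atLeast_Suc_atMost)
  also have "\<dots> \<le> card H * p ^ l + (\<Sum>b=1..l. real (card U) ^ b * n ^ (l - b) * p ^ (l - b))"
    using fH p of_nat_mono[OF card_edges_meeting_le[OF H U], where 'a=real]
    by (intro add_mono sum_mono mult_right_mono) (simp_all add: card_mono)
  also have "\<dots> = card H * p ^ l + (\<Sum>b=1..l. real (card U) ^ b * (n * p) ^ (l - b))"
    by (simp add: power_mult_distrib mult.assoc)
  finally show ?thesis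
    using p by (simp add: mult_left_mono)
qed

lemma sum_power_card_Un_edge_le_sparse:
  fixes p \<rho> :: real
  assumes H: "uniform_hypergraph n l H" and cH: "card H \<le> \<rho> * n ^ l"
    and U: "U \<subseteq> {..<n}" and cU: "card U \<le> \<rho> * l * (n * p)"
    and p: "0 \<le> p" "p \<le> 1" and \<rho>: "0 \<le> \<rho>" "\<rho> * l \<le> 1"
  shows "(\<Sum>A\<in>H. p ^ card (U \<union> A)) \<le> p ^ card U * (\<rho> * (1 + real l ^ 2) * (n * p) ^ l)"
proof -
  define m where "m = n * p"
  have m: "0 \<le> m" using p by (simp add: m_def)
  have meeting: "real (card U) ^ b * m ^ (l - b) \<le> \<rho> * l * m ^ l" if b: "b \<in> {1..l}" for b
  proof -
    have "real (card U) ^ b * m ^ (l - b) \<le> (\<rho> * l * m) ^ b * m ^ (l - b)"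
      using cU m by (intro mult_right_mono power_mono) (auto simp: m_def)
    also have "\<dots> = (\<rho> * l) ^ b * m ^ l"
      using b by (simp add: power_mult_distrib mult.assoc flip: power_add)
    also have "\<dots> \<le> (\<rho> * l) ^ 1 * m ^ l"
      using b \<rho> m by (intro mult_right_mono power_decreasing) auto
    finally show ?thesis by simp
  qed
  have "card H * p ^ l + (\<Sum>b=1..l. real (card U) ^ b * m ^ (l - b))
      \<le> \<rho> * m ^ l + (\<Sum>b=1..l. \<rho> * l * m ^ l)"
  proof (rule add_mono)
    show "card H * p ^ l \<le> \<rho> * m ^ l"
      using mult_right_mono[OF cH, of "p ^ l"] p by (simp add: m_def power_mult_distrib mult.assoc)
  qed (rule sum_mono[OF meeting])
  also have "\<dots> = \<rho> * (1 + real l ^ 2) * m ^ l"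
    by (simp add: power2_eq_square algebra_simps)
  finally show ?thesis
    using p by (intro order_trans[OF sum_power_card_Un_edge_le[OF H U p]] mult_left_mono)
      (simp_all add: m_def)
qed

definition ind_selects :: "nat set \<Rightarrow> (nat \<Rightarrow> bool) \<Rightarrow> real" where
  "ind_selects U f = (if U \<subseteq> {v. f v} then 1 else 0)"

lemma induced_edges_eq_sum_ind_selects:
  assumes "finite H"
  shows "real (induced_edges H {v. f v}) = (\<Sum>A\<in>H. ind_selects A f)"
  using assms by (simp add: induced_edges_def ind_selects_def sum.If_cases Int_def)

lemma ind_selects_mult: "ind_selects U f * ind_selects A f = ind_selects (U \<union> A) f"
  by (simp add: ind_selects_def)

lemma finite_set_pmf_random_subset: "finite (set_pmf (random_subset n p))"
  unfolding random_subset_def by (simp add: set_Pi_pmf) (intro finite_PiE_dflt, auto)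

lemma integrable_random_subset: "integrable (measure_pmf (random_subset n p)) (g :: _ \<Rightarrow> real)"
  by (rule integrable_measure_pmf_finite[OF finite_set_pmf_random_subset])

lemma expectation_ind_selects:
  assumes U: "U \<subseteq> {..<n}" and p: "0 \<le> p" "p \<le> 1"
  shows "measure_pmf.expectation (random_subset n p) (ind_selects U) = p ^ card U"
proof -
  have "ind_selects U = indicator (Pi {..<n} (\<lambda>v. if v \<in> U then {True} else UNIV))"
    using U by (auto simp: ind_selects_def fun_eq_iff indicator_def Pi_def)
  then have "measure_pmf.expectation (random_subset n p) (ind_selects U)
      = (\<Prod>v<n. measure_pmf.prob (bernoulli_pmf p) (if v \<in> U then {True} else UNIV))"
    unfolding random_subset_def by (simp add: measure_Pi_pmf_Pi)
  also have "\<dots> = (\<Prod>v<n. if v \<in> U then p else 1)"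
    using p by (intro prod.cong) (auto simp: measure_pmf_single)
  also have "\<dots> = p ^ card U"
    using U by (simp add: prod.If_cases Int_absorb1)
  finally show ?thesis .
qed

lemma expectation_ind_selects_mult_power_Suc:
  assumes "finite H"
  shows "measure_pmf.expectation (random_subset n p)
      (\<lambda>f. ind_selects U f * real (induced_edges H {v. f v}) ^ Suc k)
    = (\<Sum>A\<in>H. measure_pmf.expectation (random_subset n p)
      (\<lambda>f. ind_selects (U \<union> A) f * real (induced_edges H {v. f v}) ^ k))"
proof -
  have "(\<Sum>A\<in>H. ind_selects (U \<union> A) f * real (induced_edges H {v. f v}) ^ k)
      = ind_selects U f * real (induced_edges H {v. f v}) ^ Suc k" for f
  proof -
    have "(\<Sum>A\<in>H. ind_selects (U \<union> A) f * real (induced_edges H {v. f v}) ^ k)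
        = ind_selects U f * real (induced_edges H {v. f v}) ^ k * (\<Sum>A\<in>H. ind_selects A f)"
      by (simp add: sum_distrib_left sum_distrib_right mult_ac flip: ind_selects_mult)
    then show ?thesis
      by (simp add: induced_edges_eq_sum_ind_selects[OF assms] mult_ac)
  qed
  then show ?thesis
    by (simp add: integrable_random_subset flip: Bochner_Integration.integral_sum)
qed

lemma expectation_ind_selects_mult_power_le:
  fixes p C \<Lambda> :: real
  assumes H: "uniform_hypergraph n l H" and p: "0 \<le> p" "p \<le> 1" and C: "0 \<le> C"
    and sparse: "\<And>U. U \<subseteq> {..<n} \<Longrightarrow> card U \<le> \<Lambda> \<Longrightarrow> (\<Sum>A\<in>H. p ^ card (U \<union> A)) \<le> p ^ card U * C"
    and U: "U \<subseteq> {..<n}" and size: "real (card U + k * l) \<le> \<Lambda> + l"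
  shows "measure_pmf.expectation (random_subset n p)
      (\<lambda>f. ind_selects U f * real (induced_edges H {v. f v}) ^ k) \<le> p ^ card U * C ^ k"
  using U size
proof (induction k arbitrary: U)
  case 0
  then show ?case using expectation_ind_selects[OF _ p] by simp
next
  case (Suc k)
  have IH: "measure_pmf.expectation (random_subset n p)
      (\<lambda>f. ind_selects (U \<union> A) f * real (induced_edges H {v. f v}) ^ k) \<le> p ^ card (U \<union> A) * C ^ k"
    if A: "A \<in> H" for A
  proof (rule Suc.IH)
    show "U \<union> A \<subseteq> {..<n}" using Suc.prems(1) uniform_hypergraph_edgeD[OF H A] by auto
    have "card (U \<union> A) \<le> card U + l" using card_Un_le[of U A] uniform_hypergraph_edgeD[OF H A] by simp
    then show "real (card (U \<union> A) + k * l) \<le> \<Lambda> + l" using Suc.prems(2) by simp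
  qed
  have "measure_pmf.expectation (random_subset n p)
      (\<lambda>f. ind_selects U f * real (induced_edges H {v. f v}) ^ Suc k)
    \<le> (\<Sum>A\<in>H. p ^ card (U \<union> A) * C ^ k)"
    unfolding expectation_ind_selects_mult_power_Suc[OF uniform_hypergraph_finite[OF H]]
    by (rule sum_mono[OF IH])
  also have "\<dots> = C ^ k * (\<Sum>A\<in>H. p ^ card (U \<union> A))"
    by (simp add: sum_distrib_left mult_ac)
  also have "\<dots> \<le> C ^ k * (p ^ card U * C)"
  proof -
    have "real (card U) + real k * real l \<le> \<Lambda>"
      using Suc.prems(2) by (simp add: algebra_simps)
    moreover have "0 \<le> real k * real l" by simp
    ultimately have "real (card U) \<le> \<Lambda>" by linarith
    then show ?thesis using sparse[OF Suc.prems(1)] C by (intro mult_left_mono) auto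
  qed
  finally show ?case by (simp add: mult_ac)
qed

lemma expectation_induced_edges_power_le:
  fixes p \<rho> :: real
  assumes H: "uniform_hypergraph n l H" and cH: "card H \<le> \<rho> * n ^ l"
    and p: "0 \<le> p" "p \<le> 1" and \<rho>: "0 \<le> \<rho>" "\<rho> * l \<le> 1" and K: "K \<le> \<rho> * (n * p) + 1"
  shows "measure_pmf.expectation (random_subset n p) (\<lambda>f. real (induced_edges H {v. f v}) ^ K)
    \<le> (\<rho> * (1 + real l ^ 2) * (n * p) ^ l) ^ K"
proof -
  have size: "real (card {} + K * l) \<le> \<rho> * l * (n * p) + l"
    using mult_right_mono[OF K, of l] by (simp add: algebra_simps)
  from expectation_ind_selects_mult_power_le[OF H p _
      sum_power_card_Un_edge_le_sparse[OF H cH _ _ p \<rho>] _ size]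
  show ?thesis using \<rho> p by (simp add: ind_selects_def)
qed

lemma measure_pmf_prob_ge_le_moment:
  fixes X :: "'a \<Rightarrow> real"
  assumes "integrable (measure_pmf q) (\<lambda>x. X x ^ k)" "\<And>x. 0 \<le> X x" "0 < a"
  shows "measure_pmf.prob q {x. a \<le> X x} \<le> measure_pmf.expectation q (\<lambda>x. X x ^ k) / a ^ k"
proof -
  have "measure_pmf.prob q {x. a \<le> X x} \<le> measure_pmf.prob q {x. a ^ k \<le> X x ^ k}"
    using assms(3) by (intro measure_pmf.finite_measure_mono) (auto intro: power_mono)
  also have "\<dots> \<le> measure_pmf.expectation q (\<lambda>x. X x ^ k) / a ^ k"
    using integral_Markov_inequality_measure[of q "\<lambda>x. X x ^ k" UNIV "a ^ k"] assms by simp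
  finally show ?thesis .
qed

lemma power_le_exp_neg:
  fixes q x :: real
  assumes "0 \<le> q" "q \<le> exp (- 1)" "x \<le> K"
  shows "q ^ K \<le> exp (- x)"
proof -
  have "q ^ K \<le> exp (- 1) ^ K" using assms by (intro power_mono)
  also have "\<dots> = exp (- real K)" by (simp flip: exp_of_nat_mult)
  also have "\<dots> \<le> exp (- x)" using assms by simp
  finally show ?thesis .
qed

lemma prob_induced_edges_ge_le:
  fixes \<alpha> \<rho> p :: real
  assumes H: "uniform_hypergraph n l H" and cH: "card H \<le> \<rho> * n ^ l"
    and p: "0 \<le> p" "p \<le> 1" and \<alpha>: "0 < \<alpha>" and \<rho>: "0 < \<rho>" "\<rho> * l \<le> 1"
    and ratio: "\<rho> * (1 + real l ^ 2) \<le> \<alpha> * exp (- 1)"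
  shows "measure_pmf.prob (random_subset n p)
      {f. real (induced_edges H {v. f v}) \<ge> \<alpha> * (n * p) ^ l} \<le> exp (- \<rho> * n * p)"
proof (cases "n * p = 0")
  case True
  then have "exp (- \<rho> * n * p) = 1" by simp
  then show ?thesis by (simp only: measure_pmf.prob_le_1)
next
  case False
  then have m: "0 < n * p" using p by simp
  define K where "K = nat \<lceil>\<rho> * (n * p)\<rceil>"
  have K: "\<rho> * (n * p) \<le> K" "K \<le> \<rho> * (n * p) + 1"
    using \<rho> m by (simp_all add: K_def of_nat_nat ceiling_correct)
  define C where "C = \<rho> * (1 + real l ^ 2) * (n * p) ^ l"
  have "measure_pmf.prob (random_subset n p)
      {f. \<alpha> * (n * p) ^ l \<le> real (induced_edges H {v. f v})}
    \<le> measure_pmf.expectation (random_subset n p) (\<lambda>f. real (induced_edges H {v. f v}) ^ K)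
      / (\<alpha> * (n * p) ^ l) ^ K"
    using \<alpha> m by (intro measure_pmf_prob_ge_le_moment integrable_random_subset) auto
  also have "\<dots> \<le> C ^ K / (\<alpha> * (n * p) ^ l) ^ K"
    unfolding C_def using expectation_induced_edges_power_le[OF H cH p _ \<rho>(2) K(2)] \<rho> \<alpha> m
    by (intro divide_right_mono) auto
  also have "\<dots> = (C / (\<alpha> * (n * p) ^ l)) ^ K"
    by (simp add: power_divide)
  also have "C / (\<alpha> * (n * p) ^ l) = \<rho> * (1 + real l ^ 2) / \<alpha>"
    using m by (auto simp: C_def)
  also have "(\<rho> * (1 + real l ^ 2) / \<alpha>) ^ K \<le> exp (- (\<rho> * (n * p)))"
    using ratio \<alpha> \<rho> K(1) by (intro power_le_exp_neg) (auto simp: field_simps)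
  finally show ?thesis by (simp add: mult.assoc)
qed

theorem mainTheorem5:
  fixes \<alpha> :: real and l :: nat
  assumes "\<alpha> > 0" and "l > 0"
  shows "\<exists>\<rho>>0. \<forall>n::nat. \<forall>H::nat set set.
           uniform_hypergraph n l H \<and> real (card H) \<le> \<rho> * real n ^ l \<longrightarrow>
           (\<forall>p::real. 0 \<le> p \<and> p \<le> 1 \<longrightarrow>
              measure_pmf.prob (random_subset n p)
                {f. real (induced_edges H {v. f v}) \<ge> \<alpha> * (real n * p) ^ l}
              \<le> exp (- \<rho> * real n * p))"
proof (intro exI conjI allI impI)
  define \<rho> where "\<rho> = min (\<alpha> * exp (- 1) / (1 + real l ^ 2)) (1 / l)"
  show "\<rho> > 0" using assms by (simp add: \<rho>_def add_pos_nonneg)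
  have "\<rho> * l \<le> 1" using assms by (simp add: \<rho>_def min_mult_distrib_right)
  moreover have "\<rho> * (1 + real l ^ 2) \<le> \<alpha> * exp (- 1)"
    using assms by (simp add: \<rho>_def min_mult_distrib_right add_pos_nonneg)
  ultimately show "measure_pmf.prob (random_subset n p)
      {f. real (induced_edges H {v. f v}) \<ge> \<alpha> * (real n * p) ^ l} \<le> exp (- \<rho> * real n * p)"
    if "uniform_hypergraph n l H \<and> real (card H) \<le> \<rho> * real n ^ l" and "0 \<le> p \<and> p \<le> 1" for n H p
    using that \<open>\<rho> > 0\<close> assms(1) by (intro prob_induced_edges_ge_le) auto
qed

end
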